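(* If $G_1$ and $G_2$ admit uniform WIASIs, then the cartesian product $G_1\times G_2$ admits a uniform WIASI and $\varphi(G_1\times G_2)=0$.
   Context: All graphs are finite, simple and without isolated vertices. $\mathbb{N}_0$ denotes the set of non-negative integers; for finite $A,B\subseteq\mathbb{N}_0$, $A+B=\{a+b: a\in A, b\in B\}$. An integer additive set-indexer (IASI) of a graph $G$ is an injective map $f$ from $V(G)$ to the finite non-empty subsets of $\mathbb{N}_0$ such that the induced edge map $f^+(uv)=f(u)+f(v)$ is injective on $E(G)$. A weak IASI (WIASI) is an IASI $f$ with $|f^+(uv)|=\max(|f(u)|,|f(v)|)$ for every edge $uv$ (equivalently, for every edge at least one end vertex has a singleton label). A vertex or edge is mono-indexed if its set-label has cardinality $1$. Every graph admits a WIASI. The sparing number $\varphi(G)$ is the minimum, over all WIASIs of $G$, of the number of mono-indexed edges of $G$. For an integer $k\ge 2$, a WIASI $f$ is $k$-uniform if $|f^+(e)|=k$ for every edge $e$; $G$ admits a uniform WIASI (UWIASI) if it admits a $k$-uniform WIASI for some integer $k\ge 2$. The cartesian product $G_1\times G_2$ has vertex set $V(G_1)\times V(G_2)$, with $(a,b)$ adjacent to $(a',b')$ iff either $a=a'$ and $bb'\in E(G_2)$, or $b=b'$ and $aa'\in E(G_1)$. *)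

theory Defs
  imports Main "HOL-Library.Set_Algebras"
begin

definition graph :: "'a set \<Rightarrow> 'a set set \<Rightarrow> bool" where
  "graph V E \<longleftrightarrow> finite V \<and>
     (\<forall>e\<in>E. \<exists>u v. u \<noteq> v \<and> u \<in> V \<and> v \<in> V \<and> e = {u, v}) \<and>
     (\<forall>v\<in>V. \<exists>e\<in>E. v \<in> e)"

definition edge_label :: "('a \<Rightarrow> nat set) \<Rightarrow> 'a \<Rightarrow> 'a \<Rightarrow> nat set" where
  "edge_label f u v = f u + f v"

definition iasi :: "'a set \<Rightarrow> 'a set set \<Rightarrow> ('a \<Rightarrow> nat set) \<Rightarrow> bool" where
  "iasi V E f \<longleftrightarrow>
     (\<forall>v\<in>V. finite (f v) \<and> f v \<noteq> {}) \<and> inj_on f V \<and>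
     (\<forall>u v u' v'. {u, v} \<in> E \<longrightarrow> {u', v'} \<in> E \<longrightarrow>
        edge_label f u v = edge_label f u' v' \<longrightarrow> {u, v} = {u', v'})"

definition wiasi :: "'a set \<Rightarrow> 'a set set \<Rightarrow> ('a \<Rightarrow> nat set) \<Rightarrow> bool" where
  "wiasi V E f \<longleftrightarrow> iasi V E f \<and>
     (\<forall>u v. {u, v} \<in> E \<longrightarrow> card (edge_label f u v) = max (card (f u)) (card (f v)))"

definition mono_edges :: "'a set set \<Rightarrow> ('a \<Rightarrow> nat set) \<Rightarrow> nat" where
  "mono_edges E f = card {e \<in> E. \<exists>u v. e = {u, v} \<and> card (edge_label f u v) = 1}"

definition sparing_number :: "'a set \<Rightarrow> 'a set set \<Rightarrow> nat" where
  "sparing_number V E = (LEAST n. \<exists>f. wiasi V E f \<and> mono_edges E f = n)"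

definition k_uniform_wiasi :: "nat \<Rightarrow> 'a set \<Rightarrow> 'a set set \<Rightarrow> ('a \<Rightarrow> nat set) \<Rightarrow> bool" where
  "k_uniform_wiasi k V E f \<longleftrightarrow> wiasi V E f \<and>
     (\<forall>u v. {u, v} \<in> E \<longrightarrow> card (edge_label f u v) = k)"

definition admits_uwiasi :: "'a set \<Rightarrow> 'a set set \<Rightarrow> bool" where
  "admits_uwiasi V E \<longleftrightarrow> (\<exists>k\<ge>2. \<exists>f. k_uniform_wiasi k V E f)"

definition cart_edges :: "'a set \<Rightarrow> 'a set set \<Rightarrow> 'b set \<Rightarrow> 'b set set \<Rightarrow> ('a \<times> 'b) set set" where
  "cart_edges V1 E1 V2 E2 =
     {{(a, b), (a, b')} | a b b'. a \<in> V1 \<and> {b, b'} \<in> E2} \<union>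
     {{(a, b), (a', b)} | a a' b. b \<in> V2 \<and> {a, a'} \<in> E1}"

end

theory Submission
  imports Defs
begin

(* In a k-uniform WIASI with k >= 2 every edge has exactly one mono-indexed
   end: at least one because the labelling is weak (two labels of size >= 2 have a
   strictly larger sumset), at most one because the edge label is not a singleton.
   Hence "being mono-indexed" is a proper 2-colouring of each factor.  Comparing the
   two colours of the coordinates gives a proper 2-colouring of G1 x G2, and every
   properly 2-coloured graph carries an explicit 2-uniform WIASI: one colour class
   gets distinct singletons {n v}, the other gets pairs {N(n v + 1), N(n v + 1) + 1},
   so an edge label {c, c + 1} encodes both ends through c in base N.  A uniform
   WIASI has no mono-indexed edge, so the sparing number is 0. *)

text \<open>Adding a set with two distinct elements strictly enlarges any non-empty finite
  set of naturals: with \<open>x < y\<close> in \<open>A\<close>, the sumset contains \<open>x + B\<close> and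
  also \<open>y + Max B\<close>, which exceeds every element of \<open>x + B\<close>.\<close>
lemma card_sumset_gt:
  fixes A B :: "nat set"
  assumes "finite A" "finite B" "card A \<ge> 2" "B \<noteq> {}"
  shows "card B < card (A + B)"
proof -
  obtain x y where xy: "x \<in> A" "y \<in> A" "x < y"
    using assms(1,3) card_le_Suc0_iff_eq[OF assms(1)] by (metis linorder_neqE_nat not_less_eq_eq numeral_2_eq_2)
  define m where "m = Max B"
  have m: "m \<in> B" "\<And>b. b \<in> B \<Longrightarrow> b \<le> m"
    using assms(2,4) by (simp_all add: m_def)
  have new: "y + m \<notin> (+) x ` B"
    using m(2) \<open>x < y\<close> by fastforce
  have sub: "insert (y + m) ((+) x ` B) \<subseteq> A + B"
    using xy m(1) by (auto simp: set_plus_def)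
  have "card B < card (insert (y + m) ((+) x ` B))"
    using new assms(2) by (simp add: card_image)
  also have "\<dots> \<le> card (A + B)"
    using sub by (rule card_mono[OF finite_set_plus[OF assms(1,2)]])
  finally show ?thesis .
qed

lemma edge_label_sym: "edge_label f u v = edge_label f v u"
  by (simp add: edge_label_def add.commute)

lemma graph_edge_ends: "graph V E \<Longrightarrow> {u, v} \<in> E \<Longrightarrow> u \<in> V \<and> v \<in> V"
  unfolding graph_def by (metis doubleton_eq_iff)

definition mono_indexed :: "('a \<Rightarrow> nat set) \<Rightarrow> 'a \<Rightarrow> bool" where
  "mono_indexed f v \<longleftrightarrow> card (f v) = 1"

lemma uniform_wiasi_mono_alternates:
  assumes k: "k \<ge> 2" and f: "k_uniform_wiasi k V E f"
    and e: "{u, v} \<in> E" and ends: "u \<in> V" "v \<in> V"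
  shows "mono_indexed f u \<noteq> mono_indexed f v"
proof -
  have fin: "finite (f u)" "finite (f v)" and ne: "f u \<noteq> {}" "f v \<noteq> {}"
    using f ends unfolding k_uniform_wiasi_def wiasi_def iasi_def by auto
  have weak: "card (edge_label f u v) = max (card (f u)) (card (f v))"
    and uniform: "card (edge_label f u v) = k"
    using f e unfolding k_uniform_wiasi_def wiasi_def by auto
  have pos: "card (f u) \<ge> 1" "card (f v) \<ge> 1"
    using fin ne by (simp_all add: Suc_le_eq card_gt_0_iff)
  have not_both: "\<not> (card (f u) = 1 \<and> card (f v) = 1)"
    using weak uniform k by auto
  have "card (f v) < card (edge_label f u v)" if "card (f u) \<ge> 2"
    using card_sumset_gt[OF fin that ne(2)] by (simp add: edge_label_def)
  moreover have "card (f u) < card (edge_label f u v)" if "card (f v) \<ge> 2"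
    using card_sumset_gt[OF fin(2,1) that ne(1)] by (simp add: edge_label_def add.commute)
  ultimately have some: "card (f u) = 1 \<or> card (f v) = 1"
    using weak pos by fastforce
  show ?thesis
    using not_both some by (auto simp: mono_indexed_def)
qed

lemma base_code_inj:
  fixes i i' j j' N :: nat
  assumes "i < N" "i' < N" "i + N * j = i' + N * j'"
  shows "i = i' \<and> j = j'"
proof -
  have "i = (i + N * j) mod N" "j = (i + N * j) div N" using assms(1) by simp_all
  moreover have "i' = (i' + N * j') mod N" "j' = (i' + N * j') div N" using assms(2) by simp_all
  ultimately show ?thesis using assms(3) by metis
qed

definition colour_label :: "('c \<Rightarrow> nat) \<Rightarrow> nat \<Rightarrow> ('c \<Rightarrow> bool) \<Rightarrow> 'c \<Rightarrow> nat set" where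
  "colour_label n N \<sigma> p = (if \<sigma> p then {n p} else {N * (n p + 1), N * (n p + 1) + 1})"

lemma colour_label_edge:
  assumes "\<sigma> a" "\<not> \<sigma> b"
  shows "edge_label (colour_label n N \<sigma>) a b = {n a + N * (n b + 1), n a + N * (n b + 1) + 1}"
  using assms by (auto simp: edge_label_def colour_label_def set_plus_def)

lemma card_colour_label: "card (colour_label n N \<sigma> p) = (if \<sigma> p then 1 else 2)"
  by (simp add: colour_label_def)

lemma colour_label_inj:
  assumes n: "inj_on n V" "\<And>v. v \<in> V \<Longrightarrow> n v < N"
  shows "inj_on (colour_label n N \<sigma>) V"
proof (rule inj_onI)
  fix x y assume x: "x \<in> V" and y: "y \<in> V" and eq: "colour_label n N \<sigma> x = colour_label n N \<sigma> y"
  have "\<sigma> x = \<sigma> y"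
    using arg_cong[OF eq, of card] by (simp add: card_colour_label split: if_splits)
  moreover have "N > 0" using n(2)[OF x] by simp
  ultimately have "n x = n y"
    using eq by (auto simp: colour_label_def doubleton_eq_iff split: if_splits)
  thus "x = y" using n(1) x y by (meson inj_onD)
qed

lemma proper_2_colouring_uwiasi:
  fixes V :: "'c set" and E :: "'c set set" and \<sigma> :: "'c \<Rightarrow> bool"
  assumes fin: "finite V"
    and ends: "\<And>u v. {u, v} \<in> E \<Longrightarrow> u \<in> V \<and> v \<in> V"
    and proper: "\<And>u v. {u, v} \<in> E \<Longrightarrow> \<sigma> u \<noteq> \<sigma> v"
  shows "\<exists>f. k_uniform_wiasi 2 V E f"
proof -
  obtain n :: "'c \<Rightarrow> nat" and N where nN: "n ` V = {i. i < N}" and n_inj: "inj_on n V"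
    using finite_imp_inj_to_nat_seg[OF fin] by blast
  have n_lt: "\<And>v. v \<in> V \<Longrightarrow> n v < N" using nN by auto
  define f where "f = colour_label n N \<sigma>"
  define code where "code a b = n a + N * (n b + 1)" for a b
  have orient: "\<exists>a b. {u, v} = {a, b} \<and> \<sigma> a \<and> \<not> \<sigma> b \<and> a \<in> V \<and> b \<in> V \<and>
                  edge_label f u v = {code a b, code a b + 1}"
    if e: "{u, v} \<in> E" for u v
    using proper[OF e] ends[OF e] colour_label_edge[of \<sigma> u v n N] colour_label_edge[of \<sigma> v u n N]
    by (cases "\<sigma> u") (auto simp: f_def code_def edge_label_sym[of _ u v] insert_commute)
  have edge_card: "card (edge_label f u v) = 2" if "{u, v} \<in> E" for u v
    using orient[OF that] by auto
  have edges_inj: "{u, v} = {u', v'}"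
    if e: "{u, v} \<in> E" "{u', v'} \<in> E" and eq: "edge_label f u v = edge_label f u' v'" for u v u' v'
  proof -
    obtain a b where ab: "{u, v} = {a, b}" "a \<in> V" "b \<in> V" "edge_label f u v = {code a b, code a b + 1}"
      using orient[OF e(1)] by blast
    obtain a' b' where ab': "{u', v'} = {a', b'}" "a' \<in> V" "b' \<in> V"
        "edge_label f u' v' = {code a' b', code a' b' + 1}"
      using orient[OF e(2)] by blast
    have "code a b = code a' b'"
      using eq ab(4) ab'(4) by (auto simp: doubleton_eq_iff)
    hence "n a = n a' \<and> n b + 1 = n b' + 1"
      using base_code_inj n_lt ab(2) ab'(2) unfolding code_def by blast
    hence "a = a'" "b = b'" using n_inj ab(2,3) ab'(2,3) by (auto dest: inj_onD)
    thus ?thesis using ab(1) ab'(1) by simp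
  qed
  have "iasi V E f"
    unfolding iasi_def using colour_label_inj[OF n_inj n_lt] edges_inj
    by (auto simp: f_def colour_label_def)
  moreover have "card (edge_label f u v) = max (card (f u)) (card (f v))" if "{u, v} \<in> E" for u v
    using edge_card[OF that] proper[OF that] by (auto simp: f_def card_colour_label)
  ultimately have "k_uniform_wiasi 2 V E f"
    using edge_card by (simp add: k_uniform_wiasi_def wiasi_def)
  thus ?thesis by blast
qed

text \<open>Along a product edge exactly one coordinate moves along an edge of its factor.\<close>
lemma cart_edges_proper_colouring:
  fixes \<sigma>1 :: "'a \<Rightarrow> bool" and \<sigma>2 :: "'b \<Rightarrow> bool"
  assumes g1: "graph V1 E1" and g2: "graph V2 E2"
    and p1: "\<And>a a'. {a, a'} \<in> E1 \<Longrightarrow> \<sigma>1 a \<noteq> \<sigma>1 a'"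
    and p2: "\<And>b b'. {b, b'} \<in> E2 \<Longrightarrow> \<sigma>2 b \<noteq> \<sigma>2 b'"
    and e: "{u, v} \<in> cart_edges V1 E1 V2 E2"
  shows "u \<in> V1 \<times> V2 \<and> v \<in> V1 \<times> V2 \<and>
         (\<sigma>1 (fst u) = \<sigma>2 (snd u)) \<noteq> (\<sigma>1 (fst v) = \<sigma>2 (snd v))"
proof -
  from e consider
      (second) a b b' where "{u, v} = {(a, b), (a, b')}" "a \<in> V1" "{b, b'} \<in> E2"
    | (first) a a' b where "{u, v} = {(a, b), (a', b)}" "b \<in> V2" "{a, a'} \<in> E1"
    unfolding cart_edges_def by blast
  then show ?thesis
  proof cases
    case second
    have "(\<sigma>1 a = \<sigma>2 b) \<noteq> (\<sigma>1 a = \<sigma>2 b')"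
      using p2[OF second(3)] by blast
    then show ?thesis
      using second graph_edge_ends[OF g2 second(3)] by (auto simp: doubleton_eq_iff)
  next
    case first
    have "(\<sigma>1 a = \<sigma>2 b) \<noteq> (\<sigma>1 a' = \<sigma>2 b)"
      using p1[OF first(3)] by blast
    then show ?thesis
      using first graph_edge_ends[OF g1 first(3)] by (auto simp: doubleton_eq_iff)
  qed
qed

lemma uwiasi_sparing_number_0:
  assumes "admits_uwiasi V E"
  shows "sparing_number V E = 0"
proof -
  obtain k f where k: "k \<ge> 2" and f: "k_uniform_wiasi k V E f"
    using assms unfolding admits_uwiasi_def by blast
  have "{e \<in> E. \<exists>u v. e = {u, v} \<and> card (edge_label f u v) = 1} = {}"
    using f k unfolding k_uniform_wiasi_def by force
  hence "mono_edges E f = 0" unfolding mono_edges_def by (simp only: card.empty)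
  hence "\<exists>f. wiasi V E f \<and> mono_edges E f = 0"
    using f unfolding k_uniform_wiasi_def by blast
  thus ?thesis unfolding sparing_number_def by (rule Least_eq_0)
qed

theorem mainTheorem14:
  fixes V1 :: "'a set" and E1 :: "'a set set" and V2 :: "'b set" and E2 :: "'b set set"
  assumes "graph V1 E1" and "graph V2 E2"
    and "admits_uwiasi V1 E1" and "admits_uwiasi V2 E2"
  shows "admits_uwiasi (V1 \<times> V2) (cart_edges V1 E1 V2 E2) \<and>
         sparing_number (V1 \<times> V2) (cart_edges V1 E1 V2 E2) = 0"
proof -
  obtain k1 g1 where k1: "k1 \<ge> 2" "k_uniform_wiasi k1 V1 E1 g1"
    using assms(3) unfolding admits_uwiasi_def by blast
  obtain k2 g2 where k2: "k2 \<ge> 2" "k_uniform_wiasi k2 V2 E2 g2"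
    using assms(4) unfolding admits_uwiasi_def by blast
  have p1: "mono_indexed g1 a \<noteq> mono_indexed g1 a'" if "{a, a'} \<in> E1" for a a'
    using uniform_wiasi_mono_alternates[OF k1 that] graph_edge_ends[OF assms(1) that] by blast
  have p2: "mono_indexed g2 b \<noteq> mono_indexed g2 b'" if "{b, b'} \<in> E2" for b b'
    using uniform_wiasi_mono_alternates[OF k2 that] graph_edge_ends[OF assms(2) that] by blast
  define \<sigma> where "\<sigma> p \<longleftrightarrow> (mono_indexed g1 (fst p) = mono_indexed g2 (snd p))" for p
  have "finite (V1 \<times> V2)"
    using assms(1,2) unfolding graph_def by simp
  moreover have "u \<in> V1 \<times> V2 \<and> v \<in> V1 \<times> V2 \<and> \<sigma> u \<noteq> \<sigma> v"
    if "{u, v} \<in> cart_edges V1 E1 V2 E2" for u v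
    unfolding \<sigma>_def using cart_edges_proper_colouring[OF assms(1,2) p1 p2 that] .
  ultimately obtain f where "k_uniform_wiasi 2 (V1 \<times> V2) (cart_edges V1 E1 V2 E2) f"
    using proper_2_colouring_uwiasi[of "V1 \<times> V2" "cart_edges V1 E1 V2 E2" \<sigma>] by blast
  hence "admits_uwiasi (V1 \<times> V2) (cart_edges V1 E1 V2 E2)"
    unfolding admits_uwiasi_def by blast
  thus ?thesis using uwiasi_sparing_number_0 by blast
qed

end
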